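(* There exists an infinite symmetric matrix $M=\{m_{i,j}\}_{i,j\in \mathbf{N}}$ such that: (i) every entry $m_{i,j}$ equals $0$ or $1/4$; (ii) the support (set of indices of nonzero entries) of each row and of each column has cardinality $4$; (iii) $I-M$, acting as an operator on $\ell^2(\mathbf{N})$, is invertible on $\ell^2(\mathbf{N})$, but $I-M$, acting as an operator on $\ell^{\infty}(\mathbf{N})$, is not invertible on $\ell^{\infty}(\mathbf{N})$.
   Context: An infinite matrix $M=\{m_{i,j}\}_{i,j\in\mathbf{N}}$ acts on sequences by $(Mf)(i)=\sum_j m_{i,j}f(j)$; since each row and column has finitely many nonzero entries bounded by $1/4$, $M$ defines a bounded operator on $\ell^p(\mathbf{N})$ for every $1\le p\le\infty$. $I$ denotes the identity matrix/operator. *)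

theory Defs
  imports "HOL-Analysis.Analysis"
begin

text \<open>Infinite matrices indexed by nat, acting on real sequences. Every row of the
matrices considered has finite support, so the action is a finite sum.\<close>

definition mat_apply :: "(nat \<Rightarrow> nat \<Rightarrow> real) \<Rightarrow> (nat \<Rightarrow> real) \<Rightarrow> nat \<Rightarrow> real" where
  "mat_apply M f i = (\<Sum>j\<in>{j. M i j \<noteq> 0}. M i j * f j)"

definition id_minus :: "(nat \<Rightarrow> nat \<Rightarrow> real) \<Rightarrow> (nat \<Rightarrow> real) \<Rightarrow> nat \<Rightarrow> real" where
  "id_minus M f i = f i - mat_apply M f i"

definition l2 :: "(nat \<Rightarrow> real) set" where
  "l2 = {f. summable (\<lambda>i. (f i)\<^sup>2)}"

definition l2_norm :: "(nat \<Rightarrow> real) \<Rightarrow> real" where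
  "l2_norm f = sqrt (\<Sum>i. (f i)\<^sup>2)"

definition linf :: "(nat \<Rightarrow> real) set" where
  "linf = {f. \<exists>B. \<forall>i. \<bar>f i\<bar> \<le> B}"

definition linf_norm :: "(nat \<Rightarrow> real) \<Rightarrow> real" where
  "linf_norm f = (SUP i. \<bar>f i\<bar>)"

definition invertible_on :: "(nat \<Rightarrow> real) set \<Rightarrow> ((nat \<Rightarrow> real) \<Rightarrow> real)
    \<Rightarrow> ((nat \<Rightarrow> real) \<Rightarrow> (nat \<Rightarrow> real)) \<Rightarrow> bool" where
  "invertible_on X nX T \<longleftrightarrow>
     (\<forall>f\<in>X. T f \<in> X) \<and>
     (\<exists>S. (\<forall>f\<in>X. S f \<in> X) \<and> (\<exists>C. \<forall>f\<in>X. nX (S f) \<le> C * nX f) \<and>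
          (\<forall>f\<in>X. S (T f) = f) \<and> (\<forall>f\<in>X. T (S f) = f))"

end

theory Submission
  imports Defs
begin

text \<open>Take \<open>M = A/4\<close>, where \<open>A\<close> is the adjacency matrix of the rooted ternary tree with a
  loop at the root, a 4-regular graph. Constant sequences are fixed by \<open>M\<close>, so \<open>I - M\<close> has a
  kernel in \<open>\<ell>\<^sup>\<infinity>\<close>. On \<open>\<ell>\<^sup>2\<close>, a weighted Cauchy--Schwarz inequality gives
  \<open>\<parallel>M f\<parallel>\<^sup>2 \<le> 25/32 \<parallel>f\<parallel>\<^sup>2\<close>, so the Neumann series \<open>\<Sum>\<^sub>k M\<^sup>k\<close> converges and inverts \<open>I - M\<close>.\<close>

lemma mat_apply_diff:
  "mat_apply M (\<lambda>i. f i - g i) = (\<lambda>i. mat_apply M f i - mat_apply M g i)"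
  by (simp add: fun_eq_iff mat_apply_def right_diff_distrib sum_subtractf)

lemma id_minus_eq: "id_minus M f = (\<lambda>i. f i - mat_apply M f i)"
  by (simp add: fun_eq_iff id_minus_def)

lemma mat_apply_sums:
  assumes "\<And>j. (\<lambda>k. g k j) sums s j"
  shows "(\<lambda>k. mat_apply M (g k) i) sums mat_apply M s i"
  unfolding mat_apply_def by (intro sums_sum sums_mult assms)

lemma iterate_mat_apply_diff:
  "(mat_apply M ^^ k) (\<lambda>i. f i - g i) = (\<lambda>i. (mat_apply M ^^ k) f i - (mat_apply M ^^ k) g i)"
  by (induction k) (simp_all add: mat_apply_diff)

lemma l2_diff:
  assumes "f \<in> l2" "g \<in> l2"
  shows "(\<lambda>i. f i - g i) \<in> l2"
proof -
  have "summable (\<lambda>i. 2 * (f i)\<^sup>2 + 2 * (g i)\<^sup>2)"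
    using assms unfolding l2_def by (intro summable_add summable_mult) auto
  moreover have "(f i - g i)\<^sup>2 \<le> 2 * (f i)\<^sup>2 + 2 * (g i)\<^sup>2" for i
    using zero_le_power2[of "f i + g i"] by (simp add: power2_eq_square algebra_simps)
  ultimately show ?thesis
    unfolding l2_def by (auto intro: summable_comparison_test')
qed

lemma l2_of_bounded_partial_sums:
  assumes "\<And>N. (\<Sum>i<N. (f i)\<^sup>2) \<le> B"
  shows "f \<in> l2" "(\<Sum>i. (f i)\<^sup>2) \<le> B"
proof -
  have "summable (\<lambda>i. (f i)\<^sup>2)"
    by (rule bounded_imp_summable[where B = B]) (simp, metis assms lessThan_Suc_atMost)
  then show "f \<in> l2" "(\<Sum>i. (f i)\<^sup>2) \<le> B"
    unfolding l2_def using suminf_le_const assms by blast+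
qed

lemma l2_norm_nonneg: "f \<in> l2 \<Longrightarrow> 0 \<le> l2_norm f"
  unfolding l2_def l2_norm_def by (simp add: suminf_nonneg)

lemma L2_set_le_l2_norm:
  assumes "f \<in> l2"
  shows "L2_set f A \<le> l2_norm f"
proof (cases "finite A")
  case True
  have "(\<Sum>i\<in>A. (f i)\<^sup>2) \<le> (\<Sum>i. (f i)\<^sup>2)"
    using assms True by (intro sum_le_suminf) (simp_all add: l2_def)
  then show ?thesis
    unfolding L2_set_def l2_norm_def by (rule real_sqrt_le_mono)
qed (simp add: l2_norm_nonneg assms)

lemma not_invertible_on_linf_if_fixes_constants:
  assumes "mat_apply M (\<lambda>_. 1) = (\<lambda>_. 1)"
  shows "\<not> invertible_on linf nX (id_minus M)"
proof
  assume "invertible_on linf nX (id_minus M)"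
  then obtain S where S: "\<And>f. f \<in> linf \<Longrightarrow> S (id_minus M f) = f"
    unfolding invertible_on_def by blast
  have "id_minus M (\<lambda>_. 1) = (\<lambda>_. 0)" "id_minus M (\<lambda>_. 0) = (\<lambda>_. 0)"
    using assms by (simp_all add: fun_eq_iff id_minus_def mat_apply_def)
  moreover have "(\<lambda>_. 1::real) \<in> linf" "(\<lambda>_. 0::real) \<in> linf"
    by (auto simp: linf_def)
  ultimately have "(\<lambda>_. 1::real) = (\<lambda>_. 0)"
    using S by metis
  then show False
    by (metis zero_neq_one)
qed

locale l2_contraction =
  fixes M :: "nat \<Rightarrow> nat \<Rightarrow> real" and q :: real
  assumes maps_l2: "f \<in> l2 \<Longrightarrow> mat_apply M f \<in> l2"
    and sum_squares_le: "f \<in> l2 \<Longrightarrow> (\<Sum>i. (mat_apply M f i)\<^sup>2) \<le> q * (\<Sum>i. (f i)\<^sup>2)"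
    and q_nonneg: "0 \<le> q"
    and q_less_one: "q < 1"
begin

lemma iterate_l2:
  assumes "f \<in> l2"
  shows "(mat_apply M ^^ k) f \<in> l2 \<and> (\<Sum>i. ((mat_apply M ^^ k) f i)\<^sup>2) \<le> q ^ k * (\<Sum>i. (f i)\<^sup>2)"
proof (induction k)
  case (Suc k)
  then have "(\<Sum>i. ((mat_apply M ^^ Suc k) f i)\<^sup>2) \<le> q * (q ^ k * (\<Sum>i. (f i)\<^sup>2))"
    using sum_squares_le q_nonneg by (fastforce intro: order_trans mult_left_mono)
  with Suc show ?case
    by (simp add: maps_l2 mult.assoc)
qed (use assms in simp)

lemma L2_set_iterate_le:
  assumes "f \<in> l2"
  shows "L2_set ((mat_apply M ^^ k) f) A \<le> sqrt q ^ k * l2_norm f"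
proof -
  have "L2_set ((mat_apply M ^^ k) f) A \<le> l2_norm ((mat_apply M ^^ k) f)"
    using iterate_l2[OF assms] by (simp add: L2_set_le_l2_norm)
  also have "\<dots> \<le> sqrt (q ^ k * (\<Sum>i. (f i)\<^sup>2))"
    unfolding l2_norm_def using iterate_l2[OF assms] by simp
  also have "\<dots> = sqrt q ^ k * l2_norm f"
    by (simp add: l2_norm_def real_sqrt_mult real_sqrt_power)
  finally show ?thesis .
qed

lemma abs_iterate_le:
  assumes "f \<in> l2"
  shows "\<bar>(mat_apply M ^^ k) f i\<bar> \<le> sqrt q ^ k * l2_norm f"
  using L2_set_iterate_le[OF assms, of k "{i}"] by (simp add: L2_set_def)

definition neumann :: "(nat \<Rightarrow> real) \<Rightarrow> nat \<Rightarrow> real" where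
  "neumann f i = (\<Sum>k. (mat_apply M ^^ k) f i)"

lemma iterates_sums_neumann:
  assumes "f \<in> l2"
  shows "(\<lambda>k. (mat_apply M ^^ k) f i) sums neumann f i"
proof -
  have "summable (\<lambda>k. sqrt q ^ k * l2_norm f)"
    using q_nonneg q_less_one by (intro summable_mult2 summable_geometric) simp
  then have "summable (\<lambda>k. (mat_apply M ^^ k) f i)"
    by (rule summable_comparison_test') (simp add: abs_iterate_le[OF assms])
  then show ?thesis
    unfolding neumann_def by (rule summable_sums)
qed

lemma iterates_tendsto_zero:
  assumes "f \<in> l2"
  shows "(\<lambda>k. (mat_apply M ^^ k) f i) \<longlonglongrightarrow> 0"
proof (rule Lim_null_comparison)
  show "\<forall>\<^sub>F k in sequentially. norm ((mat_apply M ^^ k) f i) \<le> sqrt q ^ k * l2_norm f"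
    using abs_iterate_le[OF assms] by simp
  show "(\<lambda>k. sqrt q ^ k * l2_norm f) \<longlonglongrightarrow> 0"
    using q_nonneg q_less_one by (intro tendsto_mult_left_zero LIMSEQ_power_zero) simp_all
qed

lemma neumann_id_minus:
  assumes "f \<in> l2"
  shows "neumann (id_minus M f) = f"
proof
  fix i
  have "(mat_apply M ^^ k) (id_minus M f) i = (mat_apply M ^^ k) f i - (mat_apply M ^^ Suc k) f i" for k
    by (simp add: id_minus_eq iterate_mat_apply_diff flip: funpow_swap1)
  moreover have "(\<lambda>k. (mat_apply M ^^ k) f i - (mat_apply M ^^ Suc k) f i) sums ((mat_apply M ^^ 0) f i)"
    using sums_minus[OF telescope_sums[OF iterates_tendsto_zero[OF assms]]] by simp
  ultimately show "neumann (id_minus M f) i = f i"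
    unfolding neumann_def by (simp add: sums_iff)
qed

lemma id_minus_neumann:
  assumes "f \<in> l2"
  shows "id_minus M (neumann f) = f"
proof
  fix i
  have "(\<lambda>k. (mat_apply M ^^ Suc k) f i) sums mat_apply M (neumann f) i"
    using mat_apply_sums[OF iterates_sums_neumann[OF assms]] by simp
  then have "(\<lambda>k. (mat_apply M ^^ k) f i) sums (mat_apply M (neumann f) i + f i)"
    using sums_Suc_iff[of "\<lambda>k. (mat_apply M ^^ k) f i"] by simp
  then show "id_minus M (neumann f) i = f i"
    using iterates_sums_neumann[OF assms] sums_unique2 unfolding id_minus_def by fastforce
qed

lemma neumann_l2:
  assumes "f \<in> l2"
  shows "neumann f \<in> l2" "l2_norm (neumann f) \<le> 1 / (1 - sqrt q) * l2_norm f"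
proof -
  define B where "B = 1 / (1 - sqrt q) * l2_norm f"
  have B_nonneg: "0 \<le> B"
    using q_less_one by (simp add: B_def l2_norm_nonneg assms)
  have geometric_le: "(\<Sum>k<K. sqrt q ^ k * l2_norm f) \<le> B" for K
  proof -
    have "summable (\<lambda>k. sqrt q ^ k * l2_norm f)"
      using q_nonneg q_less_one by (intro summable_mult2 summable_geometric) simp
    then have "(\<Sum>k<K. sqrt q ^ k * l2_norm f) \<le> (\<Sum>k. sqrt q ^ k * l2_norm f)"
      using q_nonneg by (intro sum_le_suminf) (simp_all add: l2_norm_nonneg assms)
    also have "\<dots> = B"
      using q_nonneg q_less_one by (simp add: B_def suminf_mult2[symmetric] suminf_geometric)
    finally show ?thesis .
  qed
  have "L2_set (neumann f) {..<N} \<le> B" for N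
  proof (rule LIMSEQ_le_const2)
    show "(\<lambda>K. L2_set (\<lambda>i. \<Sum>k<K. (mat_apply M ^^ k) f i) {..<N}) \<longlonglongrightarrow> L2_set (neumann f) {..<N}"
      unfolding L2_set_def using iterates_sums_neumann[OF assms]
      by (intro tendsto_real_sqrt tendsto_sum tendsto_power) (simp add: sums_def)
    show "\<exists>K0. \<forall>K\<ge>K0. L2_set (\<lambda>i. \<Sum>k<K. (mat_apply M ^^ k) f i) {..<N} \<le> B"
    proof (intro exI allI impI)
      fix K
      have "L2_set (\<lambda>i. \<Sum>k<K. (mat_apply M ^^ k) f i) {..<N} \<le> (\<Sum>k<K. L2_set ((mat_apply M ^^ k) f) {..<N})"
        by (induction K) (auto simp: L2_set_0' intro: order_trans[OF L2_set_triangle_ineq])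
      also have "\<dots> \<le> (\<Sum>k<K. sqrt q ^ k * l2_norm f)"
        by (intro sum_mono L2_set_iterate_le assms)
      finally show "L2_set (\<lambda>i. \<Sum>k<K. (mat_apply M ^^ k) f i) {..<N} \<le> B"
        using geometric_le by (rule order_trans)
    qed
  qed
  then have "(\<Sum>i<N. (neumann f i)\<^sup>2) \<le> B\<^sup>2" for N
    by (metis L2_set_def L2_set_nonneg power_mono real_sqrt_pow2 sum_nonneg zero_le_power2)
  note partial_sums_le = this
  show "neumann f \<in> l2"
    using l2_of_bounded_partial_sums(1)[OF partial_sums_le] .
  have "l2_norm (neumann f) \<le> B"
    unfolding l2_norm_def
    using B_nonneg l2_of_bounded_partial_sums(2)[OF partial_sums_le] by (rule real_le_lsqrt)
  then show "l2_norm (neumann f) \<le> 1 / (1 - sqrt q) * l2_norm f"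
    by (simp only: B_def)
qed

theorem invertible_on_l2_id_minus: "invertible_on l2 l2_norm (id_minus M)"
  unfolding invertible_on_def
proof (intro conjI ballI exI[of _ neumann])
  show "id_minus M f \<in> l2" if "f \<in> l2" for f
    unfolding id_minus_eq using l2_diff[OF that maps_l2[OF that]] .
  show "\<exists>C. \<forall>f\<in>l2. l2_norm (neumann f) \<le> C * l2_norm f"
    using neumann_l2(2) by blast
qed (simp_all add: neumann_l2(1) neumann_id_minus id_minus_neumann)

end

text \<open>Vertex \<open>i\<close> has children \<open>3i+1, 3i+2, 3i+3\<close> and parent \<open>(i - 1) div 3\<close>; truncated
  subtraction makes the root \<open>0\<close> its own parent, a loop that gives it degree 4 as well.\<close>
definition tree_adjacent :: "nat \<Rightarrow> nat \<Rightarrow> bool" where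
  "tree_adjacent i j \<longleftrightarrow> j = (i - 1) div 3 \<or> j = 3*i + 1 \<or> j = 3*i + 2 \<or> j = 3*i + 3"

definition tree_matrix :: "nat \<Rightarrow> nat \<Rightarrow> real" where
  "tree_matrix i j = (if tree_adjacent i j then 1/4 else 0)"

lemma eq_parent_iff:
  "j = (i - 1) div 3 \<longleftrightarrow> (i = 0 \<and> j = 0) \<or> i = 3*j + 1 \<or> i = 3*j + 2 \<or> i = 3*j + 3"
  for i j :: nat
proof
  assume "j = (i - 1) div 3"
  moreover have "i - 1 = 3 * ((i - 1) div 3) + (i - 1) mod 3" "(i - 1) mod 3 < 3"
    by simp_all
  ultimately show "(i = 0 \<and> j = 0) \<or> i = 3*j + 1 \<or> i = 3*j + 2 \<or> i = 3*j + 3"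
    by (cases i) auto
qed auto

lemma tree_adjacent_sym: "tree_adjacent i j \<longleftrightarrow> tree_adjacent j i"
  unfolding tree_adjacent_def eq_parent_iff[of i j] eq_parent_iff[of j i] by auto

lemma tree_matrix_sym: "tree_matrix i j = tree_matrix j i"
  unfolding tree_matrix_def tree_adjacent_sym[of i j] ..

lemma tree_matrix_support:
  "{j. tree_matrix i j \<noteq> 0} = {(i - 1) div 3, 3*i + 1, 3*i + 2, 3*i + 3}"
  by (auto simp: tree_matrix_def tree_adjacent_def)

lemma parent_less_children: "(i - 1) div 3 < 3*i + 1" for i :: nat
  using div_le_dividend[of "i - 1" 3] by linarith

lemma card_tree_matrix_support: "card {j. tree_matrix i j \<noteq> 0} = 4"
  using parent_less_children[of i] by (simp add: tree_matrix_support)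

lemma mat_apply_tree_matrix:
  "mat_apply tree_matrix f i = (f ((i - 1) div 3) + f (3*i + 1) + f (3*i + 2) + f (3*i + 3)) / 4"
  using parent_less_children[of i]
  by (simp add: mat_apply_def tree_matrix_support) (simp add: tree_matrix_def tree_adjacent_def field_simps)

lemma tree_matrix_fixes_constants: "mat_apply tree_matrix (\<lambda>_. 1) = (\<lambda>_. 1)"
  by (simp add: fun_eq_iff mat_apply_tree_matrix)

text \<open>Cauchy--Schwarz with weights \<open>1, 1/2, 1/2, 1/2\<close>.\<close>
lemma square_sum4_le: "(a + b + c + d)\<^sup>2 \<le> 5/2 * (a\<^sup>2 + 2 * (b\<^sup>2 + c\<^sup>2 + d\<^sup>2))"
  for a b c d :: real
proof -
  have "5/2 * (a\<^sup>2 + 2 * (b\<^sup>2 + c\<^sup>2 + d\<^sup>2)) - (a + b + c + d)\<^sup>2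
      = 3/2 * (a - 2 * (b + c + d) / 3)\<^sup>2 + 5/3 * ((b - c)\<^sup>2 + (b - d)\<^sup>2 + (c - d)\<^sup>2)"
    by (simp add: power2_eq_square field_simps)
  moreover have "0 \<le> 3/2 * (a - 2 * (b + c + d) / 3)\<^sup>2 + 5/3 * ((b - c)\<^sup>2 + (b - d)\<^sup>2 + (c - d)\<^sup>2)"
    by simp
  ultimately show ?thesis
    by linarith
qed

lemma square_mat_apply_tree_matrix_le:
  "(mat_apply tree_matrix f n)\<^sup>2
    \<le> 5/32 * ((f ((n - 1) div 3))\<^sup>2 + 2 * ((f (3*n + 1))\<^sup>2 + (f (3*n + 2))\<^sup>2 + (f (3*n + 3))\<^sup>2))"
  using square_sum4_le[of "f ((n - 1) div 3)" "f (3*n + 1)" "f (3*n + 2)" "f (3*n + 3)"]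
  by (simp add: mat_apply_tree_matrix power_divide)

lemma sum_parents: "(\<Sum>n<3*N + 1. g ((n - 1) div 3)) = g 0 + 3 * (\<Sum>m<N. g m)"
  for g :: "nat \<Rightarrow> real"
proof (induction N)
  case (Suc N)
  have "3 * Suc N + 1 = Suc (Suc (Suc (3*N + 1)))" by simp
  moreover have "Suc (3*N) div 3 = N" "Suc (Suc (3*N)) div 3 = N" by simp_all
  ultimately show ?case
    by (simp only: sum.lessThan_Suc Suc.IH) simp
qed simp

lemma sum_children: "(\<Sum>n<N. g (3*n + 1) + g (3*n + 2) + g (3*n + 3)) + g 0 = (\<Sum>j<3*N + 1. g j)"
  for g :: "nat \<Rightarrow> real"
proof (induction N)
  case (Suc N)
  have "3 * Suc N + 1 = Suc (Suc (Suc (3*N + 1)))" by simp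
  then show ?case
    unfolding sum.lessThan_Suc using Suc.IH by (simp add: numeral_3_eq_3)
qed simp

text \<open>Summing the row bound, \<open>(f j)\<^sup>2\<close> gets weight 1 from each vertex whose parent is \<open>j\<close>
  (three of them, four for the root) and weight 2 from the parent of \<open>j\<close> (none for the root):
  at most 5 in total.\<close>
lemma sum_squares_tree_matrix_le:
  assumes "f \<in> l2"
  shows "mat_apply tree_matrix f \<in> l2"
    and "(\<Sum>i. (mat_apply tree_matrix f i)\<^sup>2) \<le> 25/32 * (\<Sum>i. (f i)\<^sup>2)"
proof -
  define g where "g i = (f i)\<^sup>2" for i
  define S where "S = (\<Sum>i. g i)"
  have g_nonneg: "0 \<le> g i" for i
    by (simp add: g_def)
  have partial_le_S: "(\<Sum>i<N. g i) \<le> S" for N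
    using assms unfolding S_def by (intro sum_le_suminf) (simp_all add: g_def l2_def)
  have "(\<Sum>n<N. (mat_apply tree_matrix f n)\<^sup>2) \<le> 25/32 * S" for N
  proof -
    have "(\<Sum>n<N. (mat_apply tree_matrix f n)\<^sup>2) \<le> (\<Sum>n<3*N + 1. (mat_apply tree_matrix f n)\<^sup>2)"
      by (rule sum_mono2) auto
    also have "\<dots> \<le> (\<Sum>n<3*N + 1. 5/32 * (g ((n - 1) div 3) + 2 * (g (3*n + 1) + g (3*n + 2) + g (3*n + 3))))"
      unfolding g_def by (intro sum_mono square_mat_apply_tree_matrix_le)
    also have "\<dots> = 5/32 * ((\<Sum>n<3*N + 1. g ((n - 1) div 3))
        + 2 * (\<Sum>n<3*N + 1. g (3*n + 1) + g (3*n + 2) + g (3*n + 3)))"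
      by (simp add: sum_distrib_left sum.distrib distrib_left mult.assoc)
    also have "\<dots> = 5/32 * (3 * (\<Sum>m<N. g m) + 2 * (\<Sum>j<3*(3*N + 1) + 1. g j) - g 0)"
      using sum_children[where N = "3*N + 1" and g = g] sum_parents[where N = N and g = g] by (simp only:) argo
    also have "\<dots> \<le> 25/32 * S"
      using partial_le_S[of N] partial_le_S[of "3*(3*N + 1) + 1"] g_nonneg[of 0] by simp
    finally show ?thesis .
  qed
  from l2_of_bounded_partial_sums[OF this]
  show "mat_apply tree_matrix f \<in> l2"
    and "(\<Sum>i. (mat_apply tree_matrix f i)\<^sup>2) \<le> 25/32 * (\<Sum>i. (f i)\<^sup>2)"
    unfolding S_def g_def .
qed

interpretation tree_matrix: l2_contraction tree_matrix "25/32"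
proof
  show "mat_apply tree_matrix f \<in> l2"
    and "(\<Sum>i. (mat_apply tree_matrix f i)\<^sup>2) \<le> 25/32 * (\<Sum>i. (f i)\<^sup>2)" if "f \<in> l2" for f
    using sum_squares_tree_matrix_le[OF that] by simp_all
qed simp_all

theorem mainTheorem1:
  shows "\<exists>M :: nat \<Rightarrow> nat \<Rightarrow> real.
     (\<forall>i j. M i j = M j i) \<and>
     (\<forall>i j. M i j = 0 \<or> M i j = 1/4) \<and>
     (\<forall>i. card {j. M i j \<noteq> 0} = 4) \<and>
     (\<forall>j. card {i. M i j \<noteq> 0} = 4) \<and>
     invertible_on l2 l2_norm (id_minus M) \<and>
     \<not> invertible_on linf linf_norm (id_minus M)"
proof (intro exI[of _ tree_matrix] conjI allI)
  show "tree_matrix i j = tree_matrix j i" for i j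
    by (rule tree_matrix_sym)
  show "tree_matrix i j = 0 \<or> tree_matrix i j = 1/4" for i j
    by (simp add: tree_matrix_def)
  show "card {j. tree_matrix i j \<noteq> 0} = 4" for i
    by (rule card_tree_matrix_support)
  show "card {i. tree_matrix i j \<noteq> 0} = 4" for j
    using card_tree_matrix_support[of j] by (simp add: tree_matrix_sym)
  show "invertible_on l2 l2_norm (id_minus tree_matrix)"
    by (rule tree_matrix.invertible_on_l2_id_minus)
  show "\<not> invertible_on linf linf_norm (id_minus tree_matrix)"
    using tree_matrix_fixes_constants by (rule not_invertible_on_linf_if_fixes_constants)
qed

end
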